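(* Let $\mathfrak g$ be a symmetrizable Kac–Moody algebra of indefinite type whose generalized Cartan matrix $A$ ($n\times n$) is indecomposable with $\det A\ne0$. For $\gamma\in P^+(\mathfrak g)$, the set $U(\gamma)=\{\lambda\in P^+(\mathfrak g):\lambda-\gamma\in Q^+(\mathfrak g)\}$ is finite.
   Context: $P^+(\mathfrak g)$ is the set of dominant integral weights (nonnegative integer combinations of the fundamental weights $\omega_1,\dots,\omega_n$), and $Q^+(\mathfrak g)$ the set of nonnegative integer combinations of the simple roots. Indefinite type is in the sense of Kac's classification of indecomposable generalized Cartan matrices (neither finite nor affine type). *)

theory Defs
  imports "HOL-Analysis.Analysis"
begin

definition gcm :: "int^'n^'n \<Rightarrow> bool" where
  "gcm A \<longleftrightarrow> (\<forall>i. A$i$i = 2) \<and> (\<forall>i j. i \<noteq> j \<longrightarrow> A$i$j \<le> 0)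
     \<and> (\<forall>i j. A$i$j = 0 \<longleftrightarrow> A$j$i = 0)"

definition realmat :: "int^'n^'n \<Rightarrow> real^'n^'n" where
  "realmat A = (\<chi> i j. real_of_int (A$i$j))"

definition indecomposable :: "int^'n^'n \<Rightarrow> bool" where
  "indecomposable A \<longleftrightarrow>
     \<not> (\<exists>S. S \<noteq> {} \<and> S \<noteq> UNIV \<and> (\<forall>i\<in>S. \<forall>j. j \<notin> S \<longrightarrow> A$i$j = 0 \<and> A$j$i = 0))"

definition symmetrizable :: "int^'n^'n \<Rightarrow> bool" where
  "symmetrizable A \<longleftrightarrow> (\<exists>(d::real^'n) (B::real^'n^'n).
     (\<forall>i. d$i \<noteq> 0) \<and> (\<forall>i j. B$i$j = B$j$i) \<and>
     (\<forall>i j. real_of_int (A$i$j) = d$i * B$i$j))"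

text \<open>Kac's classification (Kac, Infinite-dimensional Lie algebras, Thm 4.3). For real vectors,
  v > 0 means all coordinates positive, v \<ge> 0 all coordinates nonnegative.\<close>
definition finite_type :: "int^'n^'n \<Rightarrow> bool" where
  "finite_type A \<longleftrightarrow> det A \<noteq> 0
     \<and> (\<exists>u::real^'n. (\<forall>i. u$i > 0) \<and> (\<forall>i. (realmat A *v u)$i > 0))
     \<and> (\<forall>v::real^'n. (\<forall>i. (realmat A *v v)$i \<ge> 0) \<longrightarrow> ((\<forall>i. v$i > 0) \<or> v = 0))"

definition affine_type :: "int^'n^'n \<Rightarrow> bool" where
  "affine_type A \<longleftrightarrow> rank (realmat A) + 1 = CARD('n)
     \<and> (\<exists>u::real^'n. (\<forall>i. u$i > 0) \<and> realmat A *v u = 0)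
     \<and> (\<forall>v::real^'n. (\<forall>i. (realmat A *v v)$i \<ge> 0) \<longrightarrow> realmat A *v v = 0)"

definition indefinite_type :: "int^'n^'n \<Rightarrow> bool" where
  "indefinite_type A \<longleftrightarrow> gcm A \<and> indecomposable A \<and> \<not> finite_type A \<and> \<not> affine_type A"

text \<open>Weights: since det A \<noteq> 0 the simple coroots form a basis of the Cartan subalgebra, so
  a weight \<lambda> is identified with its vector of values (\<langle>\<lambda>, \<alpha>_i^\<or>\<rangle>)_i in real^'n.
  Fundamental weight \<omega>_i = axis i 1; simple root \<alpha>_j has coordinates \<langle>\<alpha>_j, \<alpha>_i^\<or>\<rangle> = a_ij.\<close>
definition fund_weight :: "'n \<Rightarrow> real^'n" where
  "fund_weight i = axis i 1"

definition simple_root :: "int^'n^'n \<Rightarrow> 'n \<Rightarrow> real^'n" where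
  "simple_root A j = (\<chi> i. real_of_int (A$i$j))"

definition dominant_integral :: "(real^'n) set" where
  "dominant_integral = {\<Sum>i\<in>UNIV. real (m i) *\<^sub>R fund_weight i | m. True}"

definition pos_root_lattice :: "int^'n^'n \<Rightarrow> (real^'n) set" where
  "pos_root_lattice A = {\<Sum>j\<in>UNIV. real (k j) *\<^sub>R simple_root A j | k. True}"

end

theory Submission
  imports Defs
begin

text \<open>
  Call \<open>v\<close> a supersolution if \<open>A v \<ge> 0\<close>. The heart of the matter is a lemma from Kac's
  classification: for an indecomposable generalized Cartan matrix \<open>A\<close> with \<open>det A \<noteq> 0\<close>
  that is not of finite type, the only nonnegative supersolution is \<open>0\<close>. By compactness of the
  standard simplex this upgrades to a uniform estimate: the negative parts of the coordinates of
  \<open>A v\<close> add up to at most \<open>-c \<Sum> v\<^sub>j\<close> for some \<open>c > 0\<close> and all \<open>v \<ge> 0\<close>. If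
  \<open>\<lambda> = \<gamma> + A \<kappa>\<close> is dominant with \<open>\<kappa> \<ge> 0\<close>, those negative parts are at least
  \<open>-\<Sum> \<bar>\<gamma>\<^sub>i\<bar>\<close>, so \<open>\<Sum> \<kappa>\<^sub>j \<le> \<Sum> \<bar>\<gamma>\<^sub>i\<bar> / c\<close>, leaving finitely many possibilities for
  the integral vector \<open>\<kappa>\<close>.
\<close>

lemma det_realmat: "det (realmat A) = real_of_int (det A)"
  unfolding det_def realmat_def by (simp add: of_int_sum of_int_prod)

lemma invertible_realmat: "det A \<noteq> 0 \<Longrightarrow> invertible (realmat A)"
  by (simp add: invertible_det_nz det_realmat)

lemma realmat_mult_vec_nth: "(realmat A *v x) $ i = (\<Sum>j\<in>UNIV. real_of_int (A$i$j) * x$j)"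
  by (simp add: matrix_vector_mult_def realmat_def)

lemma gcm_supersolution_zero_coord:
  fixes A :: "int^'n^'n"
  assumes "gcm A" and v_nonneg: "\<forall>l. 0 \<le> v$l"
    and "0 \<le> (realmat A *v v)$i" and "v$i = 0"
  shows "A$i$j = 0 \<or> v$j = 0"
proof -
  have terms_nonpos: "real_of_int (A$i$l) * v$l \<le> 0" for l
  proof (cases "l = i")
    case False
    then have "A$i$l \<le> 0" using \<open>gcm A\<close> unfolding gcm_def by auto
    then show ?thesis using v_nonneg by (simp add: mult_nonpos_nonneg)
  qed (use \<open>v$i = 0\<close> in simp)
  have "0 \<le> (\<Sum>l\<in>UNIV. real_of_int (A$i$l) * v$l)"
    using \<open>0 \<le> (realmat A *v v)$i\<close> by (simp add: realmat_mult_vec_nth)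
  also have "\<dots> = real_of_int (A$i$j) * v$j + (\<Sum>l\<in>UNIV - {j}. real_of_int (A$i$l) * v$l)"
    by (simp add: sum.remove)
  also have "\<dots> \<le> real_of_int (A$i$j) * v$j"
    using terms_nonpos by (simp add: sum_nonpos)
  finally have "real_of_int (A$i$j) * v$j = 0"
    using terms_nonpos[of j] by linarith
  then show ?thesis by simp
qed

lemma gcm_nonneg_supersolution_pos_or_zero:
  fixes A :: "int^'n^'n"
  assumes "gcm A" and "indecomposable A"
    and "\<forall>i. 0 \<le> v$i" and "\<forall>i. 0 \<le> (realmat A *v v)$i"
  shows "(\<forall>i. 0 < v$i) \<or> v = 0"
proof -
  define S where "S = {i. v$i = 0}"
  have "A$i$j = 0 \<and> A$j$i = 0" if "i \<in> S" "j \<notin> S" for i j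
    using gcm_supersolution_zero_coord[OF \<open>gcm A\<close>, of v i j] that assms(3,4) \<open>gcm A\<close>
    unfolding S_def gcm_def by auto
  then have "S = {} \<or> S = UNIV"
    using \<open>indecomposable A\<close> unfolding indecomposable_def by blast
  then show ?thesis
    using assms(3) unfolding S_def by (auto simp: vec_eq_iff order_less_le)
qed

text \<open>
  The shifting argument of Kac's Lemma 4.3: adding to \<open>w\<close> the least multiple \<open>t v\<close> that makes
  it nonnegative produces a zero coordinate, so \<open>w + t v = 0\<close>; then \<open>A w = -t A v\<close> would
  force \<open>A v = 0\<close>.
\<close>

lemma gcm_supersolution_pos_or_zero:
  fixes A :: "int^'n^'n"
  assumes "gcm A" and "indecomposable A"
    and v_pos: "\<forall>i. 0 < v$i" and Av_nonneg: "\<forall>i. 0 \<le> (realmat A *v v)$i"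
    and Av_nonzero: "realmat A *v v \<noteq> 0"
    and Aw_nonneg: "\<forall>i. 0 \<le> (realmat A *v w)$i"
  shows "(\<forall>i. 0 < w$i) \<or> w = 0"
proof (cases "\<forall>i. 0 \<le> w$i")
  case True
  then show ?thesis using gcm_nonneg_supersolution_pos_or_zero assms(1,2) Aw_nonneg by blast
next
  case False
  then obtain i1 where "w$i1 < 0" by (auto simp: not_le)
  define t where "t = (MAX i. - w$i / v$i)"
  have "t \<in> range (\<lambda>i. - w$i / v$i)" unfolding t_def by (rule Max_in) auto
  then obtain i0 where t_i0: "t = - w$i0 / v$i0" by blast
  have t_ge: "- w$i / v$i \<le> t" for i
    unfolding t_def by (rule Max_ge) auto
  have "0 < - w$i1 / v$i1" using \<open>w$i1 < 0\<close> v_pos by (simp add: divide_neg_pos)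
  then have "0 < t" using t_ge[of i1] by linarith
  define u where "u = w + t *\<^sub>R v"
  have u_nonneg: "\<forall>i. 0 \<le> u$i"
  proof
    fix i
    have "- w$i \<le> t * v$i"
      using t_ge[of i] v_pos by (metis pos_divide_le_eq mult.commute)
    then show "0 \<le> u$i" by (simp add: u_def)
  qed
  have "u$i0 = 0" using t_i0 v_pos[rule_format, of i0] by (simp add: u_def field_simps)
  have Au: "realmat A *v u = realmat A *v w + t *\<^sub>R (realmat A *v v)"
    by (simp add: u_def algebra_simps)
  then have "\<forall>i. 0 \<le> (realmat A *v u)$i"
    using Aw_nonneg Av_nonneg \<open>0 < t\<close> by simp
  then have "u = 0"
    using gcm_nonneg_supersolution_pos_or_zero assms(1,2) u_nonneg \<open>u$i0 = 0\<close>
    by (metis less_irrefl)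
  then have "realmat A *v w + t *\<^sub>R (realmat A *v v) = 0" by (simp flip: Au)
  then have "realmat A *v w = - t *\<^sub>R (realmat A *v v)" by (simp add: eq_neg_iff_add_eq_0)
  then have "(realmat A *v v)$i \<le> 0" for i
    using Aw_nonneg[rule_format, of i] \<open>0 < t\<close> by (simp add: mult_le_0_iff)
  then have "realmat A *v v = 0" using Av_nonneg by (simp add: vec_eq_iff order_antisym)
  then show ?thesis using Av_nonzero by contradiction
qed

lemma finite_typeI_nonneg_supersolution:
  fixes A :: "int^'n^'n"
  assumes "gcm A" and "indecomposable A" and "det A \<noteq> 0"
    and "\<forall>i. 0 \<le> v$i" and "v \<noteq> 0" and "\<forall>i. 0 \<le> (realmat A *v v)$i"
  shows "finite_type A"
proof -
  have invertible: "invertible (realmat A)" using \<open>det A \<noteq> 0\<close> by (rule invertible_realmat)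
  then have "\<forall>x. realmat A *v x = 0 \<longrightarrow> x = 0"
    by (simp add: invertible_left_inverse matrix_left_invertible_ker)
  then have Av_nonzero: "realmat A *v v \<noteq> 0" using \<open>v \<noteq> 0\<close> by blast
  have "0 < v$i" for i
    using gcm_nonneg_supersolution_pos_or_zero assms(1,2,4,6) \<open>v \<noteq> 0\<close> by blast
  then have pos_or_zero: "(\<forall>i. 0 < w$i) \<or> w = 0" if "\<forall>i. 0 \<le> (realmat A *v w)$i" for w
    using gcm_supersolution_pos_or_zero assms(1,2,6) Av_nonzero that by blast
  from invertible obtain u where Au: "realmat A *v u = (\<chi> i. 1)"
    by (metis invertible_right_inverse matrix_right_invertible_surjective surjD)
  then have "u \<noteq> 0" by (metis matrix_vector_mult_0_right vec_lambda_beta zero_index zero_neq_one)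
  then have "\<forall>i. 0 < u$i" using pos_or_zero[of u] Au by simp
  then show ?thesis
    unfolding finite_type_def using \<open>det A \<noteq> 0\<close> Au pos_or_zero by auto
qed

lemma uniform_negative_part_bound:
  fixes M :: "real^'n^'m"
  assumes trivial_cone: "\<And>v. \<forall>j. 0 \<le> v$j \<Longrightarrow> \<forall>i. 0 \<le> (M *v v)$i \<Longrightarrow> v = 0"
  obtains c where "0 < c"
    and "\<And>v. \<forall>j. 0 \<le> v$j \<Longrightarrow> (\<Sum>i\<in>UNIV. min 0 ((M *v v)$i)) \<le> - c * (\<Sum>j\<in>UNIV. v$j)"
proof -
  define g where "g v = (\<Sum>i\<in>UNIV. min 0 ((M *v v)$i))" for v
  define \<Delta> where "\<Delta> = {v :: real^'n. (\<forall>j. 0 \<le> v$j) \<and> (\<Sum>j\<in>UNIV. v$j) = 1}"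
  have "closed \<Delta>" unfolding \<Delta>_def
    by (intro closed_Collect_conj closed_Collect_all closed_Collect_le closed_Collect_eq
        continuous_intros)
  moreover have "bounded \<Delta>"
  proof (rule boundedI)
    fix v assume "v \<in> \<Delta>"
    then show "norm v \<le> 1" using norm_le_l1_cart[of v] by (simp add: \<Delta>_def)
  qed
  ultimately have "compact \<Delta>" by (simp add: compact_eq_bounded_closed)
  moreover have "axis j 1 \<in> \<Delta>" for j by (simp add: \<Delta>_def axis_def)
  then have "\<Delta> \<noteq> {}" by blast
  moreover have "continuous_on \<Delta> g" unfolding g_def by (intro continuous_intros)
  ultimately obtain v0 where "v0 \<in> \<Delta>" and v0_max: "\<And>v. v \<in> \<Delta> \<Longrightarrow> g v \<le> g v0"
    using continuous_attains_sup by metis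
  have g_neg: "g v < 0" if "v \<in> \<Delta>" for v
  proof -
    have "v \<noteq> 0" and "\<forall>j. 0 \<le> v$j" using that by (auto simp: \<Delta>_def)
    then obtain i where "(M *v v)$i < 0" using trivial_cone by (meson not_le)
    then have "\<exists>i\<in>UNIV. min 0 ((M *v v)$i) < 0" by (intro bexI[of _ i]) auto
    then show ?thesis
      unfolding g_def using sum_strict_mono_ex1[of UNIV "\<lambda>i. min 0 ((M *v v)$i)" "\<lambda>_. 0"]
      by simp
  qed
  have g_homogeneous: "g (s *\<^sub>R v) = s * g v" if "0 \<le> s" for s v
    using that by (simp add: g_def matrix_vector_mult_scaleR sum_distrib_left min_mult_distrib_left)
  have "g v \<le> g v0 * (\<Sum>j\<in>UNIV. v$j)" if v_nonneg: "\<forall>j. 0 \<le> v$j" for v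
  proof (cases "(\<Sum>j\<in>UNIV. v$j) = 0")
    case True
    then have "v = 0" using v_nonneg by (simp add: sum_nonneg_eq_0_iff vec_eq_iff)
    then show ?thesis by (simp add: g_def)
  next
    case False
    define s where "s = (\<Sum>j\<in>UNIV. v$j)"
    have "0 < s" using False v_nonneg by (simp add: s_def order_less_le sum_nonneg)
    have "(1 / s) *\<^sub>R v \<in> \<Delta>"
      using \<open>0 < s\<close> v_nonneg by (simp add: \<Delta>_def s_def flip: sum_divide_distrib)
    then have "g ((1 / s) *\<^sub>R v) \<le> g v0" by (rule v0_max)
    moreover have "v = s *\<^sub>R ((1 / s) *\<^sub>R v)" using \<open>0 < s\<close> by simp
    ultimately show ?thesis
      using \<open>0 < s\<close> g_homogeneous by (metis less_imp_le mult.commute mult_left_mono s_def)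
  qed
  then show ?thesis
    using that[of "- g v0"] g_neg[OF \<open>v0 \<in> \<Delta>\<close>] by (simp add: g_def)
qed

lemma finite_bounded_nat_vectors: "finite {k :: 'n::finite \<Rightarrow> nat. \<forall>j. k j \<le> N}"
proof -
  have "{k :: 'n \<Rightarrow> nat. \<forall>j. k j \<le> N} = PiE UNIV (\<lambda>_. {..N})"
    by (auto simp: PiE_UNIV_domain)
  then show ?thesis by (simp add: finite_PiE)
qed

lemma finite_nat_solutions_of_trivial_cone:
  fixes M :: "real^'n^'m" and b :: "real^'m"
  assumes trivial_cone: "\<And>v. \<forall>j. 0 \<le> v$j \<Longrightarrow> \<forall>i. 0 \<le> (M *v v)$i \<Longrightarrow> v = 0"
  shows "finite {k. \<forall>i. - b$i \<le> (M *v (\<chi> j. real (k j)))$i}"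
proof -
  obtain c where "0 < c" and bound:
    "\<And>v. \<forall>j. 0 \<le> v$j \<Longrightarrow> (\<Sum>i\<in>UNIV. min 0 ((M *v v)$i)) \<le> - c * (\<Sum>j\<in>UNIV. v$j)"
    using uniform_negative_part_bound trivial_cone by blast
  define B where "B = (\<Sum>i\<in>UNIV. \<bar>b$i\<bar>) / c"
  have "k j \<le> nat \<lceil>B\<rceil>" if k: "\<forall>i. - b$i \<le> (M *v (\<chi> j. real (k j)))$i" for k j
  proof -
    have "- \<bar>b$i\<bar> \<le> min 0 ((M *v (\<chi> j. real (k j)))$i)" for i
      using k[rule_format, of i] by linarith
    then have "- (\<Sum>i\<in>UNIV. \<bar>b$i\<bar>) \<le> (\<Sum>i\<in>UNIV. min 0 ((M *v (\<chi> j. real (k j)))$i))"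
      by (simp add: sum_negf[symmetric] sum_mono)
    also have "\<dots> \<le> - c * (\<Sum>j\<in>UNIV. real (k j))" using bound[of "\<chi> j. real (k j)"] by simp
    finally have "(\<Sum>j\<in>UNIV. real (k j)) \<le> B"
      using \<open>0 < c\<close> by (simp add: B_def pos_le_divide_eq mult.commute)
    moreover have "real (k j) \<le> (\<Sum>j\<in>UNIV. real (k j))" by (rule member_le_sum) auto
    ultimately show ?thesis by linarith
  qed
  then show ?thesis
    by (blast intro: finite_subset[OF _ finite_bounded_nat_vectors])
qed

lemma dominant_integral_nonneg: "lam \<in> dominant_integral \<Longrightarrow> 0 \<le> lam$i"
  by (auto simp: dominant_integral_def fund_weight_def sum_component axis_def intro!: sum_nonneg)

lemma pos_root_latticeE:
  assumes "x \<in> pos_root_lattice A"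
  obtains k where "x = realmat A *v (\<chi> j. real (k j))"
  using assms
  by (auto simp: pos_root_lattice_def simple_root_def realmat_mult_vec_nth vec_eq_iff
      sum_component mult.commute)

theorem proposition5p3:
  fixes A :: "int^'n^'n" and gam :: "real^'n"
  assumes "gcm A" and "symmetrizable A" and "indecomposable A"
    and "indefinite_type A" and "det A \<noteq> 0"
    and "gam \<in> dominant_integral"
  shows "finite {lam \<in> dominant_integral. lam - gam \<in> pos_root_lattice A}"
proof -
  have "\<not> finite_type A" using \<open>indefinite_type A\<close> by (simp add: indefinite_type_def)
  then have trivial_cone: "v = 0"
    if "\<forall>j. 0 \<le> v$j" and "\<forall>i. 0 \<le> (realmat A *v v)$i" for v
    using finite_typeI_nonneg_supersolution assms(1,3,5) that by blast
  let ?K = "{k. \<forall>i. - gam$i \<le> (realmat A *v (\<chi> j. real (k j)))$i}"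
  have "{lam \<in> dominant_integral. lam - gam \<in> pos_root_lattice A}
      \<subseteq> (\<lambda>k. gam + realmat A *v (\<chi> j. real (k j))) ` ?K"
  proof
    fix lam assume lam: "lam \<in> {lam \<in> dominant_integral. lam - gam \<in> pos_root_lattice A}"
    then obtain k where k: "lam - gam = realmat A *v (\<chi> j. real (k j))"
      by (auto elim: pos_root_latticeE)
    have "k \<in> ?K"
      using dominant_integral_nonneg lam by (simp flip: k) blast
    moreover have "lam = gam + realmat A *v (\<chi> j. real (k j))" by (simp flip: k)
    ultimately show "lam \<in> (\<lambda>k. gam + realmat A *v (\<chi> j. real (k j))) ` ?K" by blast
  qed
  moreover have "finite ?K" using finite_nat_solutions_of_trivial_cone trivial_cone by blast
  ultimately show ?thesis by (rule finite_subset[OF _ finite_imageI])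
qed

end
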